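(* Let $(S,\cdot)$ be a discrete semigroup, let $\mathcal{F}$ be a filter on $S$ such that $\overline{\mathcal{F}}$ is a subsemigroup of $\beta S$, let $(X,\langle T_s\rangle_{s\in S})$ be a dynamical system, and let $x\in X$. Then for each $F\in\mathcal{F}$ there is an $\mathcal{F}$-uniformly recurrent point $y\in\overline{\{T_s(x): s\in F\}}$ such that $x$ and $y$ are $\mathcal{F}$-proximal.
   Context: $\beta S$ is the Stone–Čech compactification of $S$ with its right topological semigroup structure; $\overline{\mathcal{F}}=\bigcap_{F\in\mathcal{F}}\overline{F}$ is the set of ultrafilters containing $\mathcal{F}$. A dynamical system $(X,\langle T_s\rangle_{s\in S})$: $X$ compact Hausdorff, each $T_s$ continuous, $T_s\circ T_t=T_{st}$. A set $A\subseteq S$ is $\mathcal{F}$-syndetic if for every $F\in\mathcal{F}$ there is a finite $G\subseteq F$ with $\bigcup_{t\in G}t^{-1}A\in\mathcal{F}$. A point $y$ is $\mathcal{F}$-uniformly recurrent if for every neighbourhood $U$ of $y$, $\{s\in S:T_s(y)\in U\}$ is $\mathcal{F}$-syndetic. Points $x,y$ are $\mathcal{F}$-proximal if for every neighbourhood $U$ of the diagonal in $X\times X$ and every $F\in\mathcal{F}$ there is $s\in F$ with $(T_s(x),T_s(y))\in U$. *)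

theory Defs
  imports "HOL-Analysis.Analysis"
begin

text \<open>Filters on S (the whole type 'a), represented as sets of subsets. Filters are proper.\<close>
definition is_filter :: "'a set set \<Rightarrow> bool" where
  "is_filter F \<longleftrightarrow> UNIV \<in> F \<and> {} \<notin> F \<and>
     (\<forall>A B. A \<in> F \<longrightarrow> B \<in> F \<longrightarrow> A \<inter> B \<in> F) \<and>
     (\<forall>A B. A \<in> F \<longrightarrow> A \<subseteq> B \<longrightarrow> B \<in> F)"

text \<open>Ultrafilters = points of the Stone-Cech compactification beta S.\<close>
definition is_ultrafilter :: "'a set set \<Rightarrow> bool" where
  "is_ultrafilter p \<longleftrightarrow> is_filter p \<and> (\<forall>A. A \<in> p \<or> - A \<in> p)"

definition lpre :: "'a::semigroup_mult \<Rightarrow> 'a set \<Rightarrow> 'a set" where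
  "lpre t A = {s. t * s \<in> A}"

text \<open>Product in beta S (right topological convention): A \<in> p q iff {x. x^{-1}A \<in> q} \<in> p.\<close>
definition ult_mult :: "'a::semigroup_mult set set \<Rightarrow> 'a set set \<Rightarrow> 'a set set" where
  "ult_mult p q = {A. {x. lpre x A \<in> q} \<in> p}"

text \<open>The closure of a filter in beta S: all ultrafilters containing it.\<close>
definition filter_closure :: "'a set set \<Rightarrow> 'a set set set" where
  "filter_closure F = {p. is_ultrafilter p \<and> F \<subseteq> p}"

definition subsemigroup_betaS :: "'a::semigroup_mult set set set \<Rightarrow> bool" where
  "subsemigroup_betaS P \<longleftrightarrow> (\<forall>p\<in>P. \<forall>q\<in>P. ult_mult p q \<in> P)"

definition dyn_system :: "('a::semigroup_mult \<Rightarrow> 'x::t2_space \<Rightarrow> 'x) \<Rightarrow> bool" where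
  "dyn_system T \<longleftrightarrow> compact (UNIV :: 'x set) \<and> (\<forall>s. continuous_on UNIV (T s)) \<and>
     (\<forall>s t. T s \<circ> T t = T (s * t))"

definition F_syndetic :: "'a::semigroup_mult set set \<Rightarrow> 'a set \<Rightarrow> bool" where
  "F_syndetic \<F> A \<longleftrightarrow> (\<forall>F\<in>\<F>. \<exists>G. finite G \<and> G \<subseteq> F \<and> (\<Union>t\<in>G. lpre t A) \<in> \<F>)"

definition F_unif_recurrent ::
  "'a::semigroup_mult set set \<Rightarrow> ('a \<Rightarrow> 'x::topological_space \<Rightarrow> 'x) \<Rightarrow> 'x \<Rightarrow> bool" where
  "F_unif_recurrent \<F> T y \<longleftrightarrow> (\<forall>U. open U \<and> y \<in> U \<longrightarrow> F_syndetic \<F> {s. T s y \<in> U})"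

text \<open>Neighbourhoods of the diagonal: sets containing an open set that contains the diagonal.\<close>
definition F_proximal ::
  "'a set set \<Rightarrow> ('a \<Rightarrow> 'x::topological_space \<Rightarrow> 'x) \<Rightarrow> 'x \<Rightarrow> 'x \<Rightarrow> bool" where
  "F_proximal \<F> T x y \<longleftrightarrow>
     (\<forall>U. (\<exists>V. open V \<and> (\<forall>z. (z, z) \<in> V) \<and> V \<subseteq> U) \<longrightarrow>
        (\<forall>F\<in>\<F>. \<exists>s\<in>F. (T s x, T s y) \<in> U))"

end

theory Submission
  imports Defs
begin

text \<open>Let \<open>P\<close> be the closure of \<open>\<F>\<close> in \<open>\<beta>S\<close>, a compact right topological semigroup. A minimal
closed left ideal \<open>L\<close> of \<open>P\<close> contains an idempotent \<open>p\<close> (Ellis--Numakura), and minimality of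
\<open>L\<close> gives, for every \<open>q \<in> P\<close>, some \<open>r \<in> P\<close> with \<open>r q p = p\<close>. The action extends to \<open>P\<close> by
\<open>T\<^sub>q z = q-lim T\<^sub>s z\<close>, with \<open>T\<^sub>q\<^sub>r = T\<^sub>q \<circ> T\<^sub>r\<close>. Put \<open>y = T\<^sub>p x\<close>. Then \<open>y\<close> is a limit of \<open>T\<^sub>s x\<close>
along \<open>p \<ni> F\<close>; \<open>T\<^sub>p y = y\<close>, so \<open>x\<close> and \<open>y\<close> are \<open>\<F>\<close>-proximal along \<open>p\<close>; and \<open>T\<^sub>r (T\<^sub>q y) = y\<close> for
all \<open>q \<in> P\<close>, which by compactness of \<open>P\<close> makes every return-time set of \<open>y\<close> \<open>\<F>\<close>-syndetic.\<close>

section \<open>Filters and ultrafilters\<close>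

lemma is_filterD:
  assumes "is_filter F"
  shows "UNIV \<in> F" "{} \<notin> F" "A \<in> F \<Longrightarrow> B \<in> F \<Longrightarrow> A \<inter> B \<in> F"
    "A \<in> F \<Longrightarrow> A \<subseteq> B \<Longrightarrow> B \<in> F"
  using assms unfolding is_filter_def by blast+

lemma ultrafilter_imp_filter: "is_ultrafilter p \<Longrightarrow> is_filter p"
  unfolding is_ultrafilter_def by blast

lemma ultrafilter_Compl_iff:
  assumes "is_ultrafilter p"
  shows "- A \<in> p \<longleftrightarrow> A \<notin> p"
proof (intro iffI notI)
  assume "- A \<in> p" "A \<in> p"
  then have "A \<inter> - A \<in> p"
    using is_filterD(3)[OF ultrafilter_imp_filter[OF assms]] by blast
  then show False
    using is_filterD(2)[OF ultrafilter_imp_filter[OF assms]] by simp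
qed (use assms is_ultrafilter_def in blast)

lemma filter_Inter_finite:
  assumes "is_filter F" "finite I" "I \<subseteq> F"
  shows "\<Inter>I \<in> F"
  using assms(2,3) is_filterD(1,3)[OF assms(1)] by (induction I rule: finite_induct) auto

lemma filter_Int_iff: "is_filter F \<Longrightarrow> A \<inter> B \<in> F \<longleftrightarrow> A \<in> F \<and> B \<in> F"
  using is_filterD(3,4)[of F] by blast

lemma filter_meets:
  assumes "is_filter F" "A \<in> F" "B \<in> F"
  obtains s where "s \<in> A" "s \<in> B"
  using is_filterD[OF assms(1)] assms(2,3) by (metis disjoint_iff)

lemma ultrafilter_eqI:
  assumes "is_ultrafilter p" "is_filter q" "p \<subseteq> q"
  shows "p = q"
proof (rule ccontr)
  assume "p \<noteq> q"
  then obtain A where "A \<in> q" "A \<notin> p"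
    using assms(3) by blast
  then have "A \<inter> - A \<in> q"
    using assms(3) ultrafilter_Compl_iff[OF assms(1)] is_filterD(3)[OF assms(2)] by blast
  then show False
    using is_filterD(2)[OF assms(2)] by simp
qed

lemma filter_generated:
  assumes "is_filter \<F>" "\<B> \<noteq> {}"
    and directed: "\<And>B1 B2. B1 \<in> \<B> \<Longrightarrow> B2 \<in> \<B> \<Longrightarrow> \<exists>B3\<in>\<B>. B3 \<subseteq> B1 \<inter> B2"
    and meets: "\<And>F B. F \<in> \<F> \<Longrightarrow> B \<in> \<B> \<Longrightarrow> F \<inter> B \<noteq> {}"
  shows "is_filter {A. \<exists>F\<in>\<F>. \<exists>B\<in>\<B>. F \<inter> B \<subseteq> A}" (is "is_filter ?H")
  unfolding is_filter_def
proof (intro conjI allI impI)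
  show "UNIV \<in> ?H"
    using assms(2) is_filterD(1)[OF assms(1)] by blast
  show "{} \<notin> ?H"
    using meets by blast
  fix A1 A2
  show "A1 \<in> ?H \<Longrightarrow> A1 \<subseteq> A2 \<Longrightarrow> A2 \<in> ?H"
    by blast
  assume "A1 \<in> ?H" "A2 \<in> ?H"
  then obtain F1 F2 B1 B2 where FB: "F1 \<in> \<F>" "F2 \<in> \<F>" "B1 \<in> \<B>" "B2 \<in> \<B>"
    "F1 \<inter> B1 \<subseteq> A1" "F2 \<inter> B2 \<subseteq> A2" by blast
  obtain B3 where "B3 \<in> \<B>" "B3 \<subseteq> B1 \<inter> B2"
    using directed FB(3,4) by blast
  moreover have "F1 \<inter> F2 \<in> \<F>"
    using is_filterD(3)[OF assms(1) FB(1,2)] .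
  moreover have "(F1 \<inter> F2) \<inter> B3 \<subseteq> A1 \<inter> A2"
    using FB(5,6) calculation(2) by blast
  ultimately show "A1 \<inter> A2 \<in> ?H"
    by blast
qed

lemma filter_Union_directed:
  assumes "\<C> \<noteq> {}" "\<And>F. F \<in> \<C> \<Longrightarrow> is_filter F"
    and directed: "\<And>F G. F \<in> \<C> \<Longrightarrow> G \<in> \<C> \<Longrightarrow> \<exists>H\<in>\<C>. F \<union> G \<subseteq> H"
  shows "is_filter (\<Union>\<C>)"
  unfolding is_filter_def
proof (intro conjI allI impI)
  fix A B
  assume "A \<in> \<Union>\<C>" "B \<in> \<Union>\<C>"
  then obtain F G where "F \<in> \<C>" "G \<in> \<C>" "A \<in> F" "B \<in> G" by blast
  moreover obtain H where "H \<in> \<C>" "F \<union> G \<subseteq> H"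
    using directed calculation(1,2) by blast
  ultimately show "A \<inter> B \<in> \<Union>\<C>"
    using is_filterD(3)[OF assms(2)[OF \<open>H \<in> \<C>\<close>]] by blast
next
  fix A B
  assume "A \<in> \<Union>\<C>" "A \<subseteq> B"
  then show "B \<in> \<Union>\<C>"
    using is_filterD(4)[OF assms(2)] by blast
qed (use assms(1) is_filterD(1,2)[OF assms(2)] in blast)+

lemma filter_Inter:
  assumes "\<C> \<noteq> {}" "\<And>F. F \<in> \<C> \<Longrightarrow> is_filter F"
  shows "is_filter (\<Inter>\<C>)"
  using assms unfolding is_filter_def by blast

lemma maximal_filter_is_ultrafilter:
  assumes M: "is_filter M" and maximal: "\<And>H. is_filter H \<Longrightarrow> M \<subseteq> H \<Longrightarrow> H = M"
  shows "is_ultrafilter M"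
proof -
  have "A \<in> M \<or> - A \<in> M" for A
  proof (rule ccontr)
    assume A: "\<not> (A \<in> M \<or> - A \<in> M)"
    have meets: "F \<inter> A \<noteq> {}" if "F \<in> M" for F
      using that A is_filterD(4)[OF M, of F "- A"] by blast
    let ?H = "{B. \<exists>F\<in>M. \<exists>A'\<in>{A}. F \<inter> A' \<subseteq> B}"
    have "is_filter ?H"
      by (rule filter_generated[OF M]) (use meets in blast)+
    moreover have "M \<subseteq> ?H"
      by blast
    ultimately have "?H = M"
      by (rule maximal)
    moreover have "A \<in> ?H"
      using is_filterD(1)[OF M] by blast
    ultimately show False
      using A by blast
  qed
  then show ?thesis
    using M unfolding is_ultrafilter_def by blast
qed

lemma ultrafilter_exists:
  assumes "is_filter G"
  obtains p where "is_ultrafilter p" "G \<subseteq> p"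
proof -
  let ?\<A> = "{H. is_filter H \<and> G \<subseteq> H}"
  have "G \<in> ?\<A>"
    using assms by simp
  then have "?\<A> \<noteq> {}"
    by blast
  then have "\<exists>M\<in>?\<A>. \<forall>H\<in>?\<A>. M \<subseteq> H \<longrightarrow> H = M"
  proof (rule subset_Zorn_nonempty)
    fix \<C> assume \<C>: "\<C> \<noteq> {}" "subset.chain ?\<A> \<C>"
    then have filters: "\<And>F. F \<in> \<C> \<Longrightarrow> is_filter F" and "G \<subseteq> \<Union>\<C>"
      unfolding subset_chain_def by blast+
    moreover have "\<exists>H\<in>\<C>. F \<union> F' \<subseteq> H" if "F \<in> \<C>" "F' \<in> \<C>" for F F'
      using \<C>(2) that unfolding subset_chain_def by (metis sup.absorb_iff2 sup_commute)
    ultimately show "\<Union>\<C> \<in> ?\<A>"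
      using filter_Union_directed[OF \<C>(1) filters] by blast
  qed
  then obtain M where "M \<in> ?\<A>" and "\<forall>H\<in>?\<A>. M \<subseteq> H \<longrightarrow> H = M"
    by (rule bexE)
  then have M: "is_filter M" "G \<subseteq> M"
    and maximal: "\<And>H. is_filter H \<Longrightarrow> M \<subseteq> H \<Longrightarrow> H = M"
    using order_trans by blast+
  show thesis
    using that[OF maximal_filter_is_ultrafilter[OF M(1) maximal] M(2)] .
qed

lemma ultrafilter_extend:
  assumes "is_filter \<F>" "\<B> \<noteq> {}"
    and "\<And>B1 B2. B1 \<in> \<B> \<Longrightarrow> B2 \<in> \<B> \<Longrightarrow> \<exists>B3\<in>\<B>. B3 \<subseteq> B1 \<inter> B2"
    and "\<And>F B. F \<in> \<F> \<Longrightarrow> B \<in> \<B> \<Longrightarrow> F \<inter> B \<noteq> {}"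
  obtains q where "is_ultrafilter q" "\<F> \<subseteq> q" "\<B> \<subseteq> q"
proof -
  let ?H = "{A. \<exists>F\<in>\<F>. \<exists>B\<in>\<B>. F \<inter> B \<subseteq> A}"
  obtain q where q: "is_ultrafilter q" "?H \<subseteq> q"
    using ultrafilter_exists[OF filter_generated[OF assms]] .
  have "\<F> \<subseteq> ?H"
    using assms(2) by blast
  moreover have "\<B> \<subseteq> ?H"
    using is_filterD(1)[OF assms(1)] by blast
  ultimately show thesis
    using that[OF q(1)] q(2) by (meson order_trans)
qed

section \<open>Closed subsets of \<open>\<beta>S\<close>\<close>

text \<open>Closedness in the Stone topology: \<open>r\<close> lies in the closure of \<open>C\<close> iff every member of \<open>r\<close>
is a member of some \<open>c \<in> C\<close>.\<close>
definition closed_betaS :: "'a set set set \<Rightarrow> bool" where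
  "closed_betaS C \<longleftrightarrow> (\<forall>c\<in>C. is_ultrafilter c) \<and>
     (\<forall>r. is_ultrafilter r \<longrightarrow> (\<forall>A\<in>r. \<exists>c\<in>C. A \<in> c) \<longrightarrow> r \<in> C)"

lemma closed_betaSD:
  assumes "closed_betaS C"
  shows "c \<in> C \<Longrightarrow> is_ultrafilter c"
    and "is_ultrafilter r \<Longrightarrow> (\<And>A. A \<in> r \<Longrightarrow> \<exists>c\<in>C. A \<in> c) \<Longrightarrow> r \<in> C"
  using assms unfolding closed_betaS_def by blast+

lemma closed_betaSI:
  assumes "\<And>c. c \<in> C \<Longrightarrow> is_ultrafilter c"
    and "\<And>r. is_ultrafilter r \<Longrightarrow> (\<And>A. A \<in> r \<Longrightarrow> \<exists>c\<in>C. A \<in> c) \<Longrightarrow> r \<in> C"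
  shows "closed_betaS C"
  using assms unfolding closed_betaS_def by blast

lemma closed_betaS_supersets: "closed_betaS {c. is_ultrafilter c \<and> \<B> \<subseteq> c}"
proof (rule closed_betaSI)
  fix r assume r: "is_ultrafilter r" and meets: "\<And>A. A \<in> r \<Longrightarrow> \<exists>c\<in>{c. is_ultrafilter c \<and> \<B> \<subseteq> c}. A \<in> c"
  have "B \<in> r" if "B \<in> \<B>" for B
  proof (rule ccontr)
    assume "B \<notin> r"
    then obtain c where "is_ultrafilter c" "\<B> \<subseteq> c" "- B \<in> c"
      using meets ultrafilter_Compl_iff[OF r] by blast
    then show False
      using that ultrafilter_Compl_iff by blast
  qed
  then show "r \<in> {c. is_ultrafilter c \<and> \<B> \<subseteq> c}"
    using r by blast
qed blast

lemma filter_closureD: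
  "q \<in> filter_closure \<F> \<Longrightarrow> is_ultrafilter q"
  "q \<in> filter_closure \<F> \<Longrightarrow> F \<in> \<F> \<Longrightarrow> F \<in> q"
  unfolding filter_closure_def by blast+

lemma filter_closure_avoiding:
  assumes \<F>: "is_filter \<F>" and no_cover: "\<And>G. finite G \<Longrightarrow> G \<subseteq> I \<Longrightarrow> (\<Union>i\<in>G. S i) \<notin> \<F>"
  obtains q where "q \<in> filter_closure \<F>" "\<And>i. i \<in> I \<Longrightarrow> S i \<notin> q"
proof -
  define uncovered where "uncovered G = - (\<Union>i\<in>G. S i)" for G
  let ?\<B> = "uncovered ` {G. finite G \<and> G \<subseteq> I}"
  have directed: "\<exists>B3\<in>?\<B>. B3 \<subseteq> B1 \<inter> B2" if B12: "B1 \<in> ?\<B>" "B2 \<in> ?\<B>" for B1 B2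
  proof -
    obtain G1 where G1: "B1 = uncovered G1" "G1 \<in> {G. finite G \<and> G \<subseteq> I}"
      using B12(1) by (rule imageE)
    obtain G2 where G2: "B2 = uncovered G2" "G2 \<in> {G. finite G \<and> G \<subseteq> I}"
      using B12(2) by (rule imageE)
    have "uncovered (G1 \<union> G2) \<in> ?\<B>"
      using G1(2) G2(2) by (intro imageI) simp
    moreover have "uncovered (G1 \<union> G2) = B1 \<inter> B2"
      unfolding G1(1) G2(1) uncovered_def by blast
    ultimately show ?thesis
      by (metis order_refl)
  qed
  have meets: "F \<inter> B \<noteq> {}" if "F \<in> \<F>" "B \<in> ?\<B>" for F B
  proof
    assume "F \<inter> B = {}"
    obtain G where G: "finite G" "G \<subseteq> I" "B = uncovered G"
      using \<open>B \<in> ?\<B>\<close> by blast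
    with \<open>F \<inter> B = {}\<close> have "F \<subseteq> (\<Union>i\<in>G. S i)"
      unfolding uncovered_def by blast
    then have "(\<Union>i\<in>G. S i) \<in> \<F>"
      by (rule is_filterD(4)[OF \<F> \<open>F \<in> \<F>\<close>])
    with no_cover G(1,2) show False
      by blast
  qed
  have "?\<B> \<noteq> {}"
    by blast
  then obtain q where q: "is_ultrafilter q" "\<F> \<subseteq> q" "?\<B> \<subseteq> q"
    using ultrafilter_extend[OF \<F> _ directed meets] by blast
  have "S i \<notin> q" if "i \<in> I" for i
  proof -
    have "uncovered {i} \<in> ?\<B>"
      using that by blast
    then show ?thesis
      using q(3) ultrafilter_Compl_iff[OF q(1)] unfolding uncovered_def by auto
  qed
  moreover have "q \<in> filter_closure \<F>"
    using q(1,2) unfolding filter_closure_def by blast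
  ultimately show thesis
    using that by blast
qed

lemma closed_betaS_singleton:
  assumes "is_ultrafilter p"
  shows "closed_betaS {p}"
proof -
  have "{c. is_ultrafilter c \<and> p \<subseteq> c} = {p}"
    using ultrafilter_eqI[OF assms] ultrafilter_imp_filter assms by blast
  then show ?thesis
    using closed_betaS_supersets[of p] by simp
qed

lemma closed_betaS_Inter:
  assumes "\<C> \<noteq> {}" "\<And>C. C \<in> \<C> \<Longrightarrow> closed_betaS C"
  shows "closed_betaS (\<Inter>\<C>)"
proof (rule closed_betaSI)
  fix r assume "is_ultrafilter r" "\<And>A. A \<in> r \<Longrightarrow> \<exists>c\<in>\<Inter>\<C>. A \<in> c"
  then show "r \<in> \<Inter>\<C>"
    using closed_betaSD(2)[OF assms(2)] by (metis InterE InterI)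
qed (use assms closed_betaSD(1) in blast)

lemma closed_betaS_Int:
  assumes "closed_betaS C" "closed_betaS D"
  shows "closed_betaS (C \<inter> D)"
proof -
  have "closed_betaS (\<Inter>{C, D})"
    by (rule closed_betaS_Inter) (use assms in auto)
  then show ?thesis
    by simp
qed

lemma closed_betaS_directed_Inter_nonempty:
  assumes "\<K> \<noteq> {}" "\<And>K. K \<in> \<K> \<Longrightarrow> closed_betaS K" "\<And>K. K \<in> \<K> \<Longrightarrow> K \<noteq> {}"
    and directed: "\<And>K1 K2. K1 \<in> \<K> \<Longrightarrow> K2 \<in> \<K> \<Longrightarrow> \<exists>K3\<in>\<K>. K3 \<subseteq> K1 \<inter> K2"
  shows "\<Inter>\<K> \<noteq> {}"
proof -
  have "is_filter (\<Inter>K)" if "K \<in> \<K>" for K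
    using filter_Inter assms(2,3) that ultrafilter_imp_filter closed_betaSD(1) by metis
  moreover have "\<exists>K3\<in>\<K>. \<Inter>K1 \<union> \<Inter>K2 \<subseteq> \<Inter>K3" if "K1 \<in> \<K>" "K2 \<in> \<K>" for K1 K2
    using directed[OF that] by blast
  ultimately have "is_filter (\<Union>K\<in>\<K>. \<Inter>K)"
    using assms(1) by (intro filter_Union_directed) auto
  then obtain r where r: "is_ultrafilter r" "(\<Union>K\<in>\<K>. \<Inter>K) \<subseteq> r"
    by (rule ultrafilter_exists)
  have "r \<in> K" if "K \<in> \<K>" for K
  proof (rule closed_betaSD(2)[OF assms(2)[OF that] r(1)])
    fix A assume "A \<in> r"
    show "\<exists>c\<in>K. A \<in> c"
    proof (rule ccontr)
      assume "\<not> (\<exists>c\<in>K. A \<in> c)"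
      then have "- A \<in> \<Inter>K"
        using ultrafilter_Compl_iff closed_betaSD(1)[OF assms(2)[OF that]] by blast
      then show False
        using r that \<open>A \<in> r\<close> ultrafilter_Compl_iff by blast
    qed
  qed
  then show ?thesis
    by blast
qed

section \<open>The semigroup \<open>\<beta>S\<close>\<close>

lemma lpre_simps [simp]:
  "lpre x UNIV = UNIV" "lpre x {} = {}" "lpre x (A \<inter> B) = lpre x A \<inter> lpre x B"
  "lpre x (- A) = - lpre x A"
  unfolding lpre_def by auto

lemma lpre_mono: "A \<subseteq> B \<Longrightarrow> lpre x A \<subseteq> lpre x B"
  unfolding lpre_def by auto

lemma ultrafilter_ult_mult:
  assumes p: "is_ultrafilter p" and q: "is_ultrafilter q"
  shows "is_ultrafilter (ult_mult p q)"
proof -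
  define Q where "Q A = {x. lpre x A \<in> q}" for A
  have mult_eq: "ult_mult p q = {A. Q A \<in> p}"
    unfolding ult_mult_def Q_def ..
  note q_filter = ultrafilter_imp_filter[OF q]
  note p_filter = ultrafilter_imp_filter[OF p]
  have "Q UNIV = UNIV" "Q {} = {}"
    using is_filterD(1,2)[OF q_filter] unfolding Q_def by simp_all
  moreover have "Q (A \<inter> B) = Q A \<inter> Q B" for A B
    using filter_Int_iff[OF q_filter] unfolding Q_def by auto
  moreover have "Q A \<subseteq> Q B" if "A \<subseteq> B" for A B
    using is_filterD(4)[OF q_filter] lpre_mono[OF that] unfolding Q_def by blast
  moreover have "Q (- A) = - Q A" for A
    using ultrafilter_Compl_iff[OF q] unfolding Q_def by auto
  ultimately show ?thesis
    unfolding mult_eq is_ultrafilter_def is_filter_def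
    using is_filterD[OF p_filter] ultrafilter_Compl_iff[OF p] by auto
qed

lemma ult_mult_assoc: "ult_mult (ult_mult p q) r = ult_mult p (ult_mult q r)"
proof -
  have "lpre s {x. lpre x A \<in> r} = {y. lpre (s * y) A \<in> r}"
    and "lpre y (lpre s A) = lpre (s * y) A" for s y A
    unfolding lpre_def by (simp_all add: mult.assoc)
  then show ?thesis
    unfolding ult_mult_def by simp
qed

lemma closed_betaS_right_mult_vimage:
  assumes K: "closed_betaS K" and a: "is_ultrafilter a"
  shows "closed_betaS {q. is_ultrafilter q \<and> ult_mult q a \<in> K}"
proof (rule closed_betaSI)
  fix r assume r: "is_ultrafilter r"
    and meets: "\<And>A. A \<in> r \<Longrightarrow> \<exists>c\<in>{q. is_ultrafilter q \<and> ult_mult q a \<in> K}. A \<in> c"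
  have "ult_mult r a \<in> K"
  proof (rule closed_betaSD(2)[OF K ultrafilter_ult_mult[OF r a]])
    fix A assume "A \<in> ult_mult r a"
    then have "{x. lpre x A \<in> a} \<in> r"
      by (simp add: ult_mult_def)
    then obtain c where "ult_mult c a \<in> K" "{x. lpre x A \<in> a} \<in> c"
      using meets by blast
    then show "\<exists>c\<in>K. A \<in> c"
      by (auto simp: ult_mult_def)
  qed
  then show "r \<in> {q. is_ultrafilter q \<and> ult_mult q a \<in> K}"
    using r by blast
qed blast

lemma closed_betaS_right_mult_member:
  assumes C: "closed_betaS C" and a: "is_ultrafilter a"
  shows "closed_betaS {q \<in> C. A \<in> ult_mult q a}"
proof -
  have eq: "{q \<in> C. A \<in> ult_mult q a} =
      C \<inter> {q. is_ultrafilter q \<and> ult_mult q a \<in> {u. is_ultrafilter u \<and> {A} \<subseteq> u}}"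
    using closed_betaSD(1)[OF C] ultrafilter_ult_mult[OF _ a] by blast
  show ?thesis
    unfolding eq by (rule closed_betaS_Int[OF C closed_betaS_right_mult_vimage[OF closed_betaS_supersets a]])
qed

lemma closed_betaS_right_mult_stabilizer:
  assumes M: "closed_betaS M" and p: "is_ultrafilter p"
  shows "closed_betaS {q \<in> M. ult_mult q p = p}"
proof -
  have eq: "{q \<in> M. ult_mult q p = p} = M \<inter> {q. is_ultrafilter q \<and> ult_mult q p \<in> {p}}"
    using closed_betaSD(1)[OF M] by blast
  show ?thesis
    unfolding eq by (rule closed_betaS_Int[OF M closed_betaS_right_mult_vimage[OF closed_betaS_singleton[OF p] p]])
qed

lemma closed_betaS_right_mult_image:
  assumes C: "closed_betaS C" and a: "is_ultrafilter a"
  shows "closed_betaS ((\<lambda>q. ult_mult q a) ` C)"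
proof (rule closed_betaSI)
  show "is_ultrafilter c" if "c \<in> (\<lambda>q. ult_mult q a) ` C" for c
    using that ultrafilter_ult_mult closed_betaSD(1)[OF C] a by blast
next
  fix r assume r: "is_ultrafilter r"
    and meets: "\<And>A. A \<in> r \<Longrightarrow> \<exists>c\<in>(\<lambda>q. ult_mult q a) ` C. A \<in> c"
  define K where "K A = {q \<in> C. A \<in> ult_mult q a}" for A
  note r_filter = is_filterD[OF ultrafilter_imp_filter[OF r]]
  have "\<Inter>(K ` r) \<noteq> {}"
  proof (rule closed_betaS_directed_Inter_nonempty)
    show "K ` r \<noteq> {}"
      using r_filter(1) by blast
    show "closed_betaS k" if "k \<in> K ` r" for k
      using that closed_betaS_right_mult_member[OF C a] unfolding K_def by blast
    show "k \<noteq> {}" if "k \<in> K ` r" for k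
      using that meets unfolding K_def by blast
    fix K1 K2 assume "K1 \<in> K ` r" "K2 \<in> K ` r"
    then obtain A1 A2 where "A1 \<in> r" "A2 \<in> r" "K1 = K A1" "K2 = K A2"
      by blast
    moreover have "K (A1 \<inter> A2) \<subseteq> K A1 \<inter> K A2"
      using filter_Int_iff[OF ultrafilter_imp_filter[OF ultrafilter_ult_mult[OF closed_betaSD(1)[OF C] a]]]
      unfolding K_def by blast
    ultimately show "\<exists>K3\<in>K ` r. K3 \<subseteq> K1 \<inter> K2"
      using r_filter(3) by blast
  qed
  then obtain q where "\<And>A. A \<in> r \<Longrightarrow> q \<in> K A"
    by blast
  then have q: "q \<in> C" "r \<subseteq> ult_mult q a"
    using r_filter(1) unfolding K_def by blast+
  have "r = ult_mult q a"
    using ultrafilter_eqI[OF r ultrafilter_imp_filter[OF ultrafilter_ult_mult] q(2)]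
      closed_betaSD(1)[OF C q(1)] a by blast
  then show "r \<in> (\<lambda>q. ult_mult q a) ` C"
    using q(1) by blast
qed

lemma subset_Zorn_minimal_nonempty:
  assumes "\<A> \<noteq> {}" and Inter_chain: "\<And>\<C>. \<C> \<noteq> {} \<Longrightarrow> subset.chain \<A> \<C> \<Longrightarrow> \<Inter>\<C> \<in> \<A>"
  shows "\<exists>M\<in>\<A>. \<forall>X\<in>\<A>. X \<subseteq> M \<longrightarrow> X = M"
proof -
  have "\<exists>M\<in>uminus ` \<A>. \<forall>X\<in>uminus ` \<A>. M \<subseteq> X \<longrightarrow> X = M"
  proof (rule subset_Zorn_nonempty)
    show "uminus ` \<A> \<noteq> {}"
      using assms(1) by blast
    fix \<C> assume "\<C> \<noteq> {}" "subset.chain (uminus ` \<A>) \<C>"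
    then have "uminus ` \<C> \<noteq> {}" "subset.chain \<A> (uminus ` \<C>)"
      unfolding subset_chain_def by (auto simp: image_subset_iff)
    then have "\<Inter>(uminus ` \<C>) \<in> \<A>"
      by (rule Inter_chain)
    moreover have "\<Union>\<C> = - \<Inter>(uminus ` \<C>)"
      by auto
    ultimately show "\<Union>\<C> \<in> uminus ` \<A>"
      by blast
  qed
  then show ?thesis
    by (metis Compl_subset_Compl_iff double_compl image_iff)
qed

lemma closed_betaS_minimal_exists:
  assumes "closed_betaS C" "C \<noteq> {}" "Q C"
    and Q_Inter: "\<And>\<C>. \<C> \<noteq> {} \<Longrightarrow> (\<And>K. K \<in> \<C> \<Longrightarrow> Q K) \<Longrightarrow> Q (\<Inter>\<C>)"
  obtains M where "M \<subseteq> C" "M \<noteq> {}" "closed_betaS M" "Q M"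
    and "\<And>N. N \<subseteq> M \<Longrightarrow> N \<noteq> {} \<Longrightarrow> closed_betaS N \<Longrightarrow> Q N \<Longrightarrow> N = M"
proof -
  let ?\<A> = "{M. M \<subseteq> C \<and> M \<noteq> {} \<and> closed_betaS M \<and> Q M}"
  have "C \<in> ?\<A>"
    using assms(1-3) by simp
  then have "?\<A> \<noteq> {}"
    by blast
  then have "\<exists>M\<in>?\<A>. \<forall>X\<in>?\<A>. X \<subseteq> M \<longrightarrow> X = M"
  proof (rule subset_Zorn_minimal_nonempty)
    fix \<C> assume \<C>: "\<C> \<noteq> {}" "subset.chain ?\<A> \<C>"
    then have sub: "\<And>K. K \<in> \<C> \<Longrightarrow> K \<subseteq> C" and ne: "\<And>K. K \<in> \<C> \<Longrightarrow> K \<noteq> {}"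
      and closed: "\<And>K. K \<in> \<C> \<Longrightarrow> closed_betaS K" and Q: "\<And>K. K \<in> \<C> \<Longrightarrow> Q K"
      and chain: "\<And>K1 K2. K1 \<in> \<C> \<Longrightarrow> K2 \<in> \<C> \<Longrightarrow> K1 \<subseteq> K2 \<or> K2 \<subseteq> K1"
      unfolding subset_chain_def by auto
    have "\<Inter>\<C> \<noteq> {}"
    proof (rule closed_betaS_directed_Inter_nonempty[OF \<C>(1) closed ne])
      show "\<exists>K3\<in>\<C>. K3 \<subseteq> K1 \<inter> K2" if "K1 \<in> \<C>" "K2 \<in> \<C>" for K1 K2
        using chain[OF that] that by (metis Int_absorb1 Int_absorb2 order_refl)
    qed
    moreover have "closed_betaS (\<Inter>\<C>)"
      using closed_betaS_Inter[OF \<C>(1) closed] .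
    moreover have "Q (\<Inter>\<C>)"
      using Q_Inter[OF \<C>(1) Q] .
    moreover have "\<Inter>\<C> \<subseteq> C"
      using \<C>(1) sub by blast
    ultimately show "\<Inter>\<C> \<in> ?\<A>"
      by simp
  qed
  then obtain M where M: "M \<subseteq> C" "M \<noteq> {}" "closed_betaS M" "Q M"
    and minimal: "\<forall>X\<in>?\<A>. X \<subseteq> M \<longrightarrow> X = M"
    by auto
  have "N = M" if "N \<subseteq> M" "N \<noteq> {}" "closed_betaS N" "Q N" for N
    using minimal M(1) that by auto
  with M show thesis
    by (rule that)
qed

text \<open>Ellis--Numakura: for \<open>p\<close> in a minimal closed subsemigroup \<open>M\<close>, both \<open>M p\<close> and
\<open>{q \<in> M. q p = p}\<close> are closed subsemigroups of \<open>M\<close>, hence equal to \<open>M\<close>.\<close>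
lemma ult_mult_idempotent_exists:
  assumes "closed_betaS M0" "M0 \<noteq> {}" "subsemigroup_betaS M0"
  obtains p where "p \<in> M0" "ult_mult p p = p"
proof -
  have Inter_subsemigroup: "subsemigroup_betaS (\<Inter>\<C>)"
    if "\<And>K. K \<in> \<C> \<Longrightarrow> subsemigroup_betaS K" for \<C>
    using that unfolding subsemigroup_betaS_def by blast
  obtain M where M: "M \<subseteq> M0" "M \<noteq> {}" "closed_betaS M" "subsemigroup_betaS M"
    and minimal: "\<And>N. N \<subseteq> M \<Longrightarrow> N \<noteq> {} \<Longrightarrow> closed_betaS N \<Longrightarrow> subsemigroup_betaS N \<Longrightarrow> N = M"
    using closed_betaS_minimal_exists[of M0 subsemigroup_betaS, OF assms Inter_subsemigroup] by blast
  then obtain p where p: "p \<in> M"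
    by blast
  have uf: "is_ultrafilter q" if "q \<in> M" for q
    using closed_betaSD(1)[OF M(3) that] .
  have mult_M: "ult_mult q q' \<in> M" if "q \<in> M" "q' \<in> M" for q q'
    using M(4) that unfolding subsemigroup_betaS_def by blast
  have "(\<lambda>q. ult_mult q p) ` M = M"
  proof (rule minimal)
    show "(\<lambda>q. ult_mult q p) ` M \<subseteq> M"
      using mult_M p by blast
    show "closed_betaS ((\<lambda>q. ult_mult q p) ` M)"
      using closed_betaS_right_mult_image[OF M(3) uf[OF p]] .
    show "subsemigroup_betaS ((\<lambda>q. ult_mult q p) ` M)"
      unfolding subsemigroup_betaS_def
      by (auto simp: ult_mult_assoc[symmetric] intro!: imageI mult_M p)
  qed (use M(2) in blast)
  then obtain q0 where q0: "q0 \<in> M" "ult_mult q0 p = p"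
    using p by (metis imageE)
  let ?E = "{q \<in> M. ult_mult q p = p}"
  have "?E = M"
  proof (rule minimal)
    show "closed_betaS ?E"
      using closed_betaS_right_mult_stabilizer[OF M(3) uf[OF p]] .
    show "subsemigroup_betaS ?E"
      unfolding subsemigroup_betaS_def by (auto simp: ult_mult_assoc mult_M)
  qed (use q0 in blast)+
  then show thesis
    using that p M(1) by blast
qed

text \<open>Take an idempotent \<open>p\<close> in a minimal closed left ideal \<open>L\<close> of \<open>P\<close>. For \<open>q \<in> P\<close> the closed
left ideal \<open>P (q p)\<close> lies in \<open>L\<close>, so it is \<open>L\<close> and contains \<open>p\<close>.\<close>
lemma minimal_idempotent_exists:
  assumes P: "closed_betaS P" "P \<noteq> {}" "subsemigroup_betaS P"
  obtains p where "p \<in> P" "ult_mult p p = p" "\<And>q. q \<in> P \<Longrightarrow> \<exists>r\<in>P. ult_mult r (ult_mult q p) = p"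
proof -
  define left_ideal where "left_ideal L \<longleftrightarrow> L \<subseteq> P \<and> (\<forall>q\<in>P. \<forall>l\<in>L. ult_mult q l \<in> L)" for L
  have P_left_ideal: "left_ideal P"
    using P(3) unfolding left_ideal_def subsemigroup_betaS_def by blast
  have Inter_left_ideal: "left_ideal (\<Inter>\<C>)"
    if "\<C> \<noteq> {}" "\<And>K. K \<in> \<C> \<Longrightarrow> left_ideal K" for \<C>
    using that unfolding left_ideal_def by blast
  obtain L where L: "L \<subseteq> P" "L \<noteq> {}" "closed_betaS L" "left_ideal L"
    and minimal: "\<And>N. N \<subseteq> L \<Longrightarrow> N \<noteq> {} \<Longrightarrow> closed_betaS N \<Longrightarrow> left_ideal N \<Longrightarrow> N = L"
    using closed_betaS_minimal_exists[of P left_ideal, OF P(1,2) P_left_ideal Inter_left_ideal] by blast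
  have mult_L: "\<And>q l. q \<in> P \<Longrightarrow> l \<in> L \<Longrightarrow> ult_mult q l \<in> L"
    using L(4) unfolding left_ideal_def by blast
  have "subsemigroup_betaS L"
    using L(1) mult_L unfolding subsemigroup_betaS_def by blast
  then obtain p where p: "p \<in> L" "ult_mult p p = p"
    using ult_mult_idempotent_exists[OF L(3,2)] by blast
  have "\<exists>r\<in>P. ult_mult r (ult_mult q p) = p" if q: "q \<in> P" for q
  proof -
    define l where "l = ult_mult q p"
    have l: "l \<in> L" "is_ultrafilter l"
      unfolding l_def using mult_L[OF q p(1)] closed_betaSD(1)[OF L(3)] by blast+
    have "(\<lambda>r. ult_mult r l) ` P = L"
    proof (rule minimal)
      show "(\<lambda>r. ult_mult r l) ` P \<subseteq> L"
        using mult_L l(1) by blast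
      show "closed_betaS ((\<lambda>r. ult_mult r l) ` P)"
        using closed_betaS_right_mult_image[OF P(1) l(2)] .
      show "left_ideal ((\<lambda>r. ult_mult r l) ` P)"
        using P(3) mult_L l(1) L(1)
        unfolding left_ideal_def subsemigroup_betaS_def by (auto simp: ult_mult_assoc[symmetric])
    qed (use P(2) in blast)
    then have "p \<in> (\<lambda>r. ult_mult r l) ` P"
      using p(1) by (simp only:)
    then show ?thesis
      unfolding l_def by blast
  qed
  with p L(1) show thesis
    by (intro that) auto
qed

section \<open>Ultrafilter limits and the extended action\<close>

definition uf_converges :: "'a set set \<Rightarrow> ('a \<Rightarrow> 'x::topological_space) \<Rightarrow> 'x \<Rightarrow> bool" where
  "uf_converges p f z \<longleftrightarrow> (\<forall>U. open U \<longrightarrow> z \<in> U \<longrightarrow> {s. f s \<in> U} \<in> p)"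

definition ulim :: "'a set set \<Rightarrow> ('a \<Rightarrow> 'x::topological_space) \<Rightarrow> 'x" where
  "ulim p f = (THE z. uf_converges p f z)"

lemma uf_converges_unique:
  fixes f :: "'a \<Rightarrow> 'x::t2_space"
  assumes "is_filter p" "uf_converges p f z1" "uf_converges p f z2"
  shows "z1 = z2"
proof (rule ccontr)
  assume "z1 \<noteq> z2"
  then obtain U V where "open U" "open V" "z1 \<in> U" "z2 \<in> V" "U \<inter> V = {}"
    using hausdorff[of z1 z2] by blast
  then have "{s. f s \<in> U} \<in> p" "{s. f s \<in> V} \<in> p"
    using assms(2,3) unfolding uf_converges_def by blast+
  then have "{s. f s \<in> U} \<inter> {s. f s \<in> V} \<in> p"
    by (rule is_filterD(3)[OF assms(1)])
  moreover have "{s. f s \<in> U} \<inter> {s. f s \<in> V} = {}"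
    using \<open>U \<inter> V = {}\<close> by blast
  ultimately show False
    using is_filterD(2)[OF assms(1)] by simp
qed

lemma uf_converges_exists:
  fixes f :: "'a \<Rightarrow> 'x::topological_space"
  assumes "compact (UNIV :: 'x set)" "is_ultrafilter p"
  obtains z where "uf_converges p f z"
proof -
  have "UNIV \<inter> (\<Inter>A\<in>p. closure (f ` A)) \<noteq> {}"
  proof (rule compact_imp_fip_image[OF assms(1)])
    fix I assume "finite I" "I \<subseteq> p"
    then have "\<Inter>I \<in> p"
      using filter_Inter_finite ultrafilter_imp_filter[OF assms(2)] by blast
    then have "f ` \<Inter>I \<noteq> {}"
      using is_filterD(2)[OF ultrafilter_imp_filter[OF assms(2)]] by auto
    moreover have "f ` \<Inter>I \<subseteq> (\<Inter>A\<in>I. closure (f ` A))"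
      using closure_subset by fast
    ultimately show "UNIV \<inter> (\<Inter>A\<in>I. closure (f ` A)) \<noteq> {}"
      by blast
  qed simp
  then obtain z where z: "\<And>A. A \<in> p \<Longrightarrow> z \<in> closure (f ` A)"
    by blast
  have "uf_converges p f z"
    unfolding uf_converges_def
  proof (intro allI impI)
    fix U assume "open U" "z \<in> U"
    show "{s. f s \<in> U} \<in> p"
    proof (rule ccontr)
      assume "{s. f s \<in> U} \<notin> p"
      then have "z \<in> closure (f ` (- {s. f s \<in> U}))"
        using z ultrafilter_Compl_iff[OF assms(2)] by blast
      moreover have "U \<inter> f ` (- {s. f s \<in> U}) = {}"
        by blast
      ultimately show False
        using open_Int_closure_eq_empty[OF \<open>open U\<close>] \<open>z \<in> U\<close> by blast
    qed
  qed
  then show thesis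
    by (rule that)
qed

lemma uf_converges_ulim:
  fixes f :: "'a \<Rightarrow> 'x::t2_space"
  assumes "compact (UNIV :: 'x set)" "is_ultrafilter p"
  shows "uf_converges p f (ulim p f)"
proof -
  obtain z where z: "uf_converges p f z"
    using uf_converges_exists[OF assms] .
  then have "\<exists>!z. uf_converges p f z"
    using uf_converges_unique[OF ultrafilter_imp_filter[OF assms(2)] _ z] by (rule ex1I)
  then show ?thesis
    unfolding ulim_def by (rule theI')
qed

lemma uf_convergesD: "uf_converges p f z \<Longrightarrow> open U \<Longrightarrow> z \<in> U \<Longrightarrow> {s. f s \<in> U} \<in> p"
  unfolding uf_converges_def by blast

lemma ulim_eqI:
  fixes f :: "'a \<Rightarrow> 'x::t2_space"
  assumes "is_filter p" "uf_converges p f z"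
  shows "ulim p f = z"
  unfolding ulim_def
  using assms(2) uf_converges_unique[OF assms(1) _ assms(2)] by (rule the_equality)

lemma ulim_in_closure:
  fixes f :: "'a \<Rightarrow> 'x::t2_space"
  assumes "compact (UNIV :: 'x set)" "is_ultrafilter p" "F \<in> p"
  shows "ulim p f \<in> closure (f ` F)"
proof (rule ccontr)
  assume "ulim p f \<notin> closure (f ` F)"
  then have escape: "{s. f s \<in> - closure (f ` F)} \<in> p"
    by (intro uf_convergesD[OF uf_converges_ulim[OF assms(1,2)]]) auto
  obtain s where "s \<in> F" "s \<in> {s. f s \<in> - closure (f ` F)}"
    using filter_meets[OF ultrafilter_imp_filter[OF assms(2)] assms(3) escape] .
  then show False
    using closure_subset[of "f ` F"] by auto
qed

definition ult_action :: "'a set set \<Rightarrow> ('a \<Rightarrow> 'x::topological_space \<Rightarrow> 'x) \<Rightarrow> 'x \<Rightarrow> 'x" where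
  "ult_action q T z = ulim q (\<lambda>s. T s z)"

lemma dyn_systemD:
  fixes T :: "'a::semigroup_mult \<Rightarrow> 'x::t2_space \<Rightarrow> 'x"
  assumes "dyn_system T"
  shows "compact (UNIV :: 'x set)" and "open U \<Longrightarrow> open (T s -` U)"
    and "T s (T t z) = T (s * t) z"
proof -
  show "compact (UNIV :: 'x set)"
    using assms unfolding dyn_system_def by blast
  show "open (T s -` U)" if "open U"
    using assms open_vimage[OF that] unfolding dyn_system_def by blast
  show "T s (T t z) = T (s * t) z"
    using assms unfolding dyn_system_def by (metis comp_apply)
qed

lemma uf_converges_ult_action:
  assumes "dyn_system T" "is_ultrafilter q"
  shows "uf_converges q (\<lambda>s. T s z) (ult_action q T z)"
  unfolding ult_action_def by (rule uf_converges_ulim[OF dyn_systemD(1)[OF assms(1)] assms(2)])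

lemma lpre_orbit:
  assumes "dyn_system T"
  shows "lpre t {s. T s z \<in> U} = {s. T s z \<in> T t -` U}"
  using dyn_systemD(3)[OF assms] unfolding lpre_def by simp

lemma ult_action_mult:
  assumes T: "dyn_system T" and q: "is_ultrafilter q" and r: "is_ultrafilter r"
  shows "ult_action (ult_mult q r) T z = ult_action q T (ult_action r T z)"
proof -
  define w where "w = ult_action r T z"
  have "uf_converges (ult_mult q r) (\<lambda>u. T u z) (ult_action q T w)"
    unfolding uf_converges_def
  proof (intro allI impI)
    fix U assume U: "open U" "ult_action q T w \<in> U"
    have "{s. T s w \<in> U} \<subseteq> {s. lpre s {u. T u z \<in> U} \<in> r}"
    proof
      fix s assume "s \<in> {s. T s w \<in> U}"
      then have "{t. T t z \<in> T s -` U} \<in> r"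
        using uf_convergesD[OF uf_converges_ult_action[OF T r] dyn_systemD(2)[OF T U(1)]]
        unfolding w_def by simp
      then show "s \<in> {s. lpre s {u. T u z \<in> U} \<in> r}"
        by (simp add: lpre_orbit[OF T])
    qed
    moreover have "{s. T s w \<in> U} \<in> q"
      using uf_convergesD[OF uf_converges_ult_action[OF T q] U] .
    ultimately show "{u. T u z \<in> U} \<in> ult_mult q r"
      using is_filterD(4)[OF ultrafilter_imp_filter[OF q]] unfolding ult_mult_def by blast
  qed
  then show ?thesis
    unfolding w_def ult_action_def
    by (rule ulim_eqI[OF ultrafilter_imp_filter[OF ultrafilter_ult_mult[OF q r]]])
qed

section \<open>Proximality and uniform recurrence\<close>

lemma F_proximal_if_common_limit:
  fixes T :: "'a \<Rightarrow> 'x::topological_space \<Rightarrow> 'x"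
  assumes p: "is_ultrafilter p" "\<F> \<subseteq> p"
    and x: "uf_converges p (\<lambda>s. T s x) z" and y: "uf_converges p (\<lambda>s. T s y) z"
  shows "F_proximal \<F> T x y"
  unfolding F_proximal_def
proof (intro allI impI ballI)
  fix U :: "('x \<times> 'x) set" and F
  assume "\<exists>V. open V \<and> (\<forall>z. (z, z) \<in> V) \<and> V \<subseteq> U" "F \<in> \<F>"
  then obtain V where V: "open V" "(z, z) \<in> V" "V \<subseteq> U"
    by blast
  obtain A B where AB: "open A" "open B" "(z, z) \<in> A \<times> B" "A \<times> B \<subseteq> V"
    using open_prod_elim[OF V(1,2)] .
  have "{s. T s x \<in> A} \<in> p" "{s. T s y \<in> B} \<in> p"
    using uf_convergesD[OF x AB(1)] uf_convergesD[OF y AB(2)] AB(3) by auto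
  then have near: "{s. T s x \<in> A} \<inter> {s. T s y \<in> B} \<in> p"
    using filter_Int_iff[OF ultrafilter_imp_filter[OF p(1)]] by blast
  obtain s where "s \<in> F" "s \<in> {s. T s x \<in> A} \<inter> {s. T s y \<in> B}"
    using filter_meets[OF ultrafilter_imp_filter[OF p(1)] _ near] p(2) \<open>F \<in> \<F>\<close> by blast
  then show "\<exists>s\<in>F. (T s x, T s y) \<in> U"
    using AB(4) V(3) by blast
qed

lemma F_syndeticI:
  assumes \<F>: "is_filter \<F>"
    and hits: "\<And>F q. F \<in> \<F> \<Longrightarrow> q \<in> filter_closure \<F> \<Longrightarrow> \<exists>t\<in>F. lpre t A \<in> q"
  shows "F_syndetic \<F> A"
  unfolding F_syndetic_def
proof
  fix F assume F: "F \<in> \<F>"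
  show "\<exists>G. finite G \<and> G \<subseteq> F \<and> (\<Union>t\<in>G. lpre t A) \<in> \<F>"
  proof (rule ccontr)
    assume "\<not> (\<exists>G. finite G \<and> G \<subseteq> F \<and> (\<Union>t\<in>G. lpre t A) \<in> \<F>)"
    then obtain q where "q \<in> filter_closure \<F>" "\<And>t. t \<in> F \<Longrightarrow> lpre t A \<notin> q"
      using filter_closure_avoiding[OF \<F>, of F "\<lambda>t. lpre t A"] by blast
    then show False
      using hits[OF F] by blast
  qed
qed

lemma F_unif_recurrentI:
  fixes T :: "'a::semigroup_mult \<Rightarrow> 'x::t2_space \<Rightarrow> 'x"
  assumes T: "dyn_system T" and \<F>: "is_filter \<F>"
    and returns: "\<And>q. q \<in> filter_closure \<F> \<Longrightarrow>
      \<exists>r\<in>filter_closure \<F>. ult_action r T (ult_action q T y) = y"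
  shows "F_unif_recurrent \<F> T y"
  unfolding F_unif_recurrent_def
proof (intro allI impI)
  fix U assume U: "open U \<and> y \<in> U"
  show "F_syndetic \<F> {s. T s y \<in> U}"
  proof (rule F_syndeticI[OF \<F>])
    fix F q assume F: "F \<in> \<F>" and q: "q \<in> filter_closure \<F>"
    define z where "z = ult_action q T y"
    obtain r where r: "r \<in> filter_closure \<F>" "ult_action r T z = y"
      using returns[OF q] unfolding z_def by blast
    have near: "{t. T t z \<in> U} \<in> r"
      using uf_convergesD[OF uf_converges_ult_action[OF T filter_closureD(1)[OF r(1)]]] r(2) U
      by simp
    obtain t where t: "t \<in> F" "t \<in> {t. T t z \<in> U}"
      using filter_meets[OF ultrafilter_imp_filter[OF filter_closureD(1)[OF r(1)]]
          filter_closureD(2)[OF r(1) F] near] .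
    have "{s. T s y \<in> T t -` U} \<in> q"
      using uf_convergesD[OF uf_converges_ult_action[OF T filter_closureD(1)[OF q]]
          dyn_systemD(2)[OF T]] U t(2) unfolding z_def by simp
    with t(1) show "\<exists>t\<in>F. lpre t {s. T s y \<in> U} \<in> q"
      by (auto simp: lpre_orbit[OF T])
  qed
qed

lemma ult_action_in_orbit_closure:
  fixes T :: "'a::semigroup_mult \<Rightarrow> 'x::t2_space \<Rightarrow> 'x"
  assumes "dyn_system T" "is_ultrafilter p" "F \<in> p"
  shows "ult_action p T x \<in> closure {T s x | s. s \<in> F}"
  using ulim_in_closure[OF dyn_systemD(1)[OF assms(1)] assms(2,3)]
  unfolding ult_action_def by (simp add: setcompr_eq_image)

lemma F_proximal_ult_action_idempotent:
  fixes T :: "'a::semigroup_mult \<Rightarrow> 'x::t2_space \<Rightarrow> 'x"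
  assumes T: "dyn_system T" and p: "p \<in> filter_closure \<F>" "ult_mult p p = p"
  shows "F_proximal \<F> T x (ult_action p T x)"
proof -
  let ?y = "ult_action p T x"
  note p_uf = filter_closureD(1)[OF p(1)]
  have "ult_action p T ?y = ?y"
    using ult_action_mult[OF T p_uf p_uf] p(2) by simp
  then have "uf_converges p (\<lambda>s. T s ?y) ?y"
    using uf_converges_ult_action[OF T p_uf, of ?y] by simp
  moreover have "uf_converges p (\<lambda>s. T s x) ?y"
    by (rule uf_converges_ult_action[OF T p_uf])
  moreover have "\<F> \<subseteq> p"
    using filter_closureD(2)[OF p(1)] by blast
  ultimately show ?thesis
    using F_proximal_if_common_limit[OF p_uf] by blast
qed

lemma F_unif_recurrent_ult_action_minimal:
  fixes T :: "'a::semigroup_mult \<Rightarrow> 'x::t2_space \<Rightarrow> 'x"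
  assumes T: "dyn_system T" and \<F>: "is_filter \<F>" and P: "subsemigroup_betaS (filter_closure \<F>)"
    and p: "p \<in> filter_closure \<F>"
    and returns: "\<And>q. q \<in> filter_closure \<F> \<Longrightarrow> \<exists>r\<in>filter_closure \<F>. ult_mult r (ult_mult q p) = p"
  shows "F_unif_recurrent \<F> T (ult_action p T x)"
proof (rule F_unif_recurrentI[OF T \<F>])
  note act_mult = ult_action_mult[OF T filter_closureD(1) filter_closureD(1)]
  fix q assume q: "q \<in> filter_closure \<F>"
  then obtain r where r: "r \<in> filter_closure \<F>" "ult_mult r (ult_mult q p) = p"
    using returns by blast
  have qp: "ult_mult q p \<in> filter_closure \<F>"
    using P q p unfolding subsemigroup_betaS_def by blast
  have "ult_action r T (ult_action q T (ult_action p T x)) = ult_action (ult_mult r (ult_mult q p)) T x"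
    using act_mult[OF q p] act_mult[OF r(1) qp] by simp
  then show "\<exists>r\<in>filter_closure \<F>. ult_action r T (ult_action q T (ult_action p T x)) = ult_action p T x"
    using r by auto
qed

theorem lemma12:
  fixes \<F> :: "'a::semigroup_mult set set"
    and T :: "'a \<Rightarrow> 'x::t2_space \<Rightarrow> 'x"
    and x :: 'x
  assumes "is_filter \<F>"
    and "subsemigroup_betaS (filter_closure \<F>)"
    and "dyn_system T"
  shows "\<forall>F\<in>\<F>. \<exists>y \<in> closure {T s x | s. s \<in> F}.
           F_unif_recurrent \<F> T y \<and> F_proximal \<F> T x y"
proof -
  have closed: "closed_betaS (filter_closure \<F>)"
    unfolding filter_closure_def by (rule closed_betaS_supersets)
  have nonempty: "filter_closure \<F> \<noteq> {}"
    using ultrafilter_exists[OF assms(1)] unfolding filter_closure_def by blast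
  obtain p where p: "p \<in> filter_closure \<F>" "ult_mult p p = p"
    and returns: "\<And>q. q \<in> filter_closure \<F> \<Longrightarrow>
      \<exists>r\<in>filter_closure \<F>. ult_mult r (ult_mult q p) = p"
    using minimal_idempotent_exists[OF closed nonempty assms(2)] by blast
  have "F_unif_recurrent \<F> T (ult_action p T x)"
    using F_unif_recurrent_ult_action_minimal[OF assms(3,1,2) p(1) returns] .
  moreover have "F_proximal \<F> T x (ult_action p T x)"
    using F_proximal_ult_action_idempotent[OF assms(3) p] .
  moreover have "ult_action p T x \<in> closure {T s x | s. s \<in> F}" if "F \<in> \<F>" for F
    using ult_action_in_orbit_closure[OF assms(3) filter_closureD(1)[OF p(1)]
        filter_closureD(2)[OF p(1) that]] .
  ultimately show ?thesis
    by blast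
qed

end
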